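(* Let $Y=\beta+\sigma\xi\in\mathbb{R}^p$ with $\beta\in\mathbb{R}^p$ unknown, $\sigma>0$ and $\xi\sim\mathcal{N}(0,\mathbb{I}_p)$. For any $a>0$, $q\ge1$, and $s$ with $s<p/2$ and $s\ge 8q\log\log(p)$, there is $C_q>0$ (depending only on $q$) such that $$\inf_{\hat\beta}\sup_{\beta\in\Omega^p_{s,a}}\mathbf{E}_\beta\big(\|\hat\beta-\beta\|_q^q\big)\ \ge\ C_q\,\Phi(a),$$ where the infimum is over all estimators $\hat\beta$.
   Context: $\Omega^p_{s,a}=\{\beta\in\mathbb{R}^p:\ |\beta|_0\le s\ \text{and}\ |\beta_i|\ge a\ \forall i\in S_\beta\}$, where $|\beta|_0$ is the number of nonzero entries and $S_\beta$ the set of indices of nonzero entries; $\mathbf{E}_\beta$ is expectation when the true parameter is $\beta$; $\|\cdot\|_q$ is the $\ell_q$ norm. $\sigma_q:=(\mathbf{E}|\zeta|^q)^{1/q}$ for $\zeta\sim\mathcal{N}(0,\sigma^2)$. Let $\varepsilon$ be standard Gaussian, $t(a):=\frac a2+\frac{\sigma^2\log(\frac ps-1)}{a}$, $t^*:=\sigma\sqrt{2\log(\frac ps-1)}$, and $\psi(p,s,a,\sigma):=(p-s)\mathbf{P}(\sigma\varepsilon>t(a))+s\,\mathbf{P}(\sigma\varepsilon>a-t(a))$. Define $\Phi(a):=a^q\psi(p,s,a,\sigma)\vee\sigma_q^qs$ if $a\ge t^*$, and $\Phi(a):=s\sigma^q\big(2\log(\frac ps-1)\big)^{q/2}$ otherwise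 ($x\vee y=\max(x,y)$). *)

theory Defs
  imports "HOL-Probability.Probability"
begin

text \<open>Vectors in R^p are functions nat => real, only coordinates i < p matter.\<close>

definition std_gauss :: "real measure" where
  "std_gauss = density lborel std_normal_density"

definition gauss_vec :: "nat \<Rightarrow> (nat \<Rightarrow> real) measure" where
  "gauss_vec p = PiM {..<p} (\<lambda>_. std_gauss)"

definition Omega :: "nat \<Rightarrow> nat \<Rightarrow> real \<Rightarrow> (nat \<Rightarrow> real) set" where
  "Omega p s a = {\<beta>. (\<forall>i. p \<le> i \<longrightarrow> \<beta> i = 0) \<and> card {i. \<beta> i \<noteq> 0} \<le> s
                      \<and> (\<forall>i. \<beta> i \<noteq> 0 \<longrightarrow> \<bar>\<beta> i\<bar> \<ge> a)}"

definition estimators :: "nat \<Rightarrow> ((nat \<Rightarrow> real) \<Rightarrow> (nat \<Rightarrow> real)) set" where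
  "estimators p = {est. \<forall>i<p. (\<lambda>y. est y i) \<in> borel_measurable (PiM {..<p} (\<lambda>_. lborel))}"

definition risk :: "nat \<Rightarrow> real \<Rightarrow> real \<Rightarrow> ((nat \<Rightarrow> real) \<Rightarrow> (nat \<Rightarrow> real)) \<Rightarrow> (nat \<Rightarrow> real) \<Rightarrow> ennreal" where
  "risk p q \<sigma> est \<beta> =
     (\<integral>\<^sup>+ \<xi>. ennreal (\<Sum>i<p. \<bar>est (restrict (\<lambda>j. \<beta> j + \<sigma> * \<xi> j) {..<p}) i - \<beta> i\<bar> powr q) \<partial>gauss_vec p)"

definition sigma_q :: "real \<Rightarrow> real \<Rightarrow> real" where
  "sigma_q q \<sigma> = (\<integral>x. \<bar>x\<bar> powr q * normal_density 0 \<sigma> x \<partial>lborel) powr (1 / q)"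

definition gauss_tail :: "real \<Rightarrow> real \<Rightarrow> real" where
  "gauss_tail \<sigma> t = measure std_gauss {x. \<sigma> * x > t}"

definition t_fun :: "nat \<Rightarrow> nat \<Rightarrow> real \<Rightarrow> real \<Rightarrow> real" where
  "t_fun p s a \<sigma> = a / 2 + \<sigma>\<^sup>2 * ln (real p / real s - 1) / a"

definition t_star :: "nat \<Rightarrow> nat \<Rightarrow> real \<Rightarrow> real" where
  "t_star p s \<sigma> = \<sigma> * sqrt (2 * ln (real p / real s - 1))"

definition psi :: "nat \<Rightarrow> nat \<Rightarrow> real \<Rightarrow> real \<Rightarrow> real" where
  "psi p s a \<sigma> = real (p - s) * gauss_tail \<sigma> (t_fun p s a \<sigma>)
                 + real s * gauss_tail \<sigma> (a - t_fun p s a \<sigma>)"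

definition Phi :: "nat \<Rightarrow> nat \<Rightarrow> real \<Rightarrow> real \<Rightarrow> real \<Rightarrow> real" where
  "Phi p s q \<sigma> a =
     (if a \<ge> t_star p s \<sigma>
      then max (a powr q * psi p s a \<sigma>) (sigma_q q \<sigma> powr q * real s)
      else real s * \<sigma> powr q * (2 * ln (real p / real s - 1)) powr (q / 2))"

end

theory Submission
  imports Defs
begin

text \<open>
  Each bound is the Bayes risk of a prior on \<open>Omega p s a\<close> under which the coordinates are
  independent and take one of two values \<open>m0 < m1\<close>. Conditioning on the other coordinates
  reduces the loss in coordinate \<open>i\<close> to estimating the mean \<open>m \<in> {m0, m1}\<close> of one observation
  \<open>N(m, \<sigma>\<^sup>2)\<close>; since every estimate is at distance at least \<open>(m1 - m0) / 2\<close> from \<open>m0\<close> or from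
  \<open>m1\<close>, this costs \<open>((m1 - m0) / 2)^q\<close> times the Bayes error of testing between the two
  Gaussians, which the likelihood-ratio threshold computes.
  Putting \<open>a\<close> on a random support with inclusion probability \<open>s / (2p)\<close>, which by Markov's
  inequality has at most \<open>s\<close> elements with probability at least \<open>1/2\<close>, gives \<open>a^q \<psi>\<close>;
  raising \<open>s\<close> fixed coordinates by \<open>\<sigma>\<close> gives \<open>s \<sigma>^q\<close>, which dominates \<open>s \<sigma>_q^q\<close> up to a
  factor depending only on \<open>q\<close>. For \<open>a < t*\<close> the supremum over \<open>Omega p s a\<close> is at least the
  one over \<open>Omega p s t*\<close>, where \<open>\<psi> \<ge> s \<phi>(1)\<close>.
\<close>

section \<open>Gaussian tails and two-point tests\<close>

lemma prob_space_std_gauss: "prob_space std_gauss"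
  unfolding std_gauss_def by (rule prob_space_normal_density) simp

lemma sets_std_gauss [measurable_cong]: "sets std_gauss = sets borel"
  unfolding std_gauss_def by simp

lemma nn_integral_std_gauss:
  "f \<in> borel_measurable borel \<Longrightarrow>
     (\<integral>\<^sup>+x. f x \<partial>std_gauss) = (\<integral>\<^sup>+x. ennreal (std_normal_density x) * f x \<partial>lborel)"
  unfolding std_gauss_def by (subst nn_integral_density) auto

lemma nn_integral_std_gauss_recenter:
  assumes [measurable]: "f \<in> borel_measurable borel" and \<sigma>: "\<sigma> > 0"
  shows "(\<integral>\<^sup>+x. f (m1 + \<sigma> * x) \<partial>std_gauss)
       = (\<integral>\<^sup>+x. ennreal (std_normal_density (x - (m1 - m0) / \<sigma>)) * f (m0 + \<sigma> * x) \<partial>lborel)"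
proof -
  define c where "c = (m1 - m0) / \<sigma>"
  have shift: "m1 + \<sigma> * (- c + x) = m0 + \<sigma> * x" for x
    using \<sigma> by (simp add: c_def field_simps)
  have "(\<integral>\<^sup>+x. f (m1 + \<sigma> * x) \<partial>std_gauss)
      = (\<integral>\<^sup>+x. ennreal (std_normal_density x) * f (m1 + \<sigma> * x) \<partial>lborel)"
    by (simp add: nn_integral_std_gauss)
  also have "\<dots> = (\<integral>\<^sup>+x. ennreal (std_normal_density (- c + x)) * f (m1 + \<sigma> * (- c + x)) \<partial>lborel)"
    by (subst nn_integral_real_affine[where c=1 and t="- c"]) auto
  finally show ?thesis
    unfolding shift by (simp add: c_def)
qed

lemma gauss_tail_nn_integral:
  assumes "\<sigma> > 0"
  shows "ennreal (gauss_tail \<sigma> t) = (\<integral>\<^sup>+x. ennreal (std_normal_density x) * indicator {t/\<sigma><..} x \<partial>lborel)"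
proof -
  interpret prob_space std_gauss by (rule prob_space_std_gauss)
  have "{x. \<sigma> * x > t} = {t/\<sigma><..}" using assms by (auto simp: field_simps)
  then have "ennreal (gauss_tail \<sigma> t) = emeasure std_gauss {t/\<sigma><..}"
    unfolding gauss_tail_def by (simp add: emeasure_eq_measure)
  then show ?thesis
    unfolding std_gauss_def by (subst (asm) emeasure_density) auto
qed

lemma gauss_tail_scale: "\<sigma> > 0 \<Longrightarrow> gauss_tail \<sigma> t = gauss_tail 1 (t / \<sigma>)"
  unfolding gauss_tail_def by (simp add: field_simps)

lemma std_normal_density_one_le:
  assumes "\<bar>x\<bar> \<le> 1"
  shows "std_normal_density 1 \<le> std_normal_density x"
proof -
  have "x\<^sup>2 \<le> 1" using assms by (simp add: abs_square_le_1)
  then show ?thesis by (simp add: std_normal_density_def divide_right_mono)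
qed

lemma std_normal_density_one_bounds: "0 < std_normal_density 1" "std_normal_density 1 \<le> 1"
proof -
  show "0 < std_normal_density 1" by (simp add: normal_density_pos)
  have "exp (- (1/2::real)) \<le> 1" "1 \<le> sqrt (2 * pi)" using pi_gt3 by (auto simp: real_le_rsqrt)
  then have "exp (- (1/2::real)) \<le> sqrt (2 * pi)" by linarith
  then show "std_normal_density 1 \<le> 1" by (simp add: std_normal_density_def divide_le_eq_1)
qed

lemma std_normal_density_one_le_gauss_tail_zero:
  assumes "\<sigma> > 0"
  shows "std_normal_density 1 \<le> gauss_tail \<sigma> 0"
proof -
  have "ennreal (std_normal_density 1) = (\<integral>\<^sup>+x. ennreal (std_normal_density 1) * indicator {0<..1::real} x \<partial>lborel)"
    by (simp add: nn_integral_cmult_indicator emeasure_lborel_Ioc)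
  also have "\<dots> \<le> (\<integral>\<^sup>+x. ennreal (std_normal_density x) * indicator {0/\<sigma><..} x \<partial>lborel)"
    by (intro nn_integral_mono)
      (auto intro!: ennreal_leI std_normal_density_one_le simp: indicator_def)
  also have "\<dots> = ennreal (gauss_tail \<sigma> 0)" by (rule gauss_tail_nn_integral[OF assms, symmetric])
  finally show ?thesis by (simp add: gauss_tail_def)
qed

lemma weighted_std_normal_density_shift:
  assumes "w0 > 0" "w1 > 0" "c > 0"
  shows "w1 * std_normal_density (x - c)
       = w0 * std_normal_density x * exp (c * (x - (c / 2 + ln (w0 / w1) / c)))"
proof -
  define \<tau> where "\<tau> = c / 2 + ln (w0 / w1) / c"
  have "- x\<^sup>2 / 2 + c * (x - \<tau>) = - (x - c)\<^sup>2 / 2 - ln (w0 / w1)"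
    using assms by (simp add: \<tau>_def field_simps power2_eq_square)
  then have "exp (- x\<^sup>2 / 2) * exp (c * (x - \<tau>)) = exp (- (x - c)\<^sup>2 / 2) * (w1 / w0)"
    using assms by (simp add: exp_add[symmetric] exp_diff)
  then show ?thesis
    unfolding \<tau>_def[symmetric] using assms by (simp add: std_normal_density_def field_simps)
qed

text \<open>The Bayes risk of testing \<open>N(0,1)\<close> against \<open>N(c,1)\<close> under prior weights \<open>w0\<close>, \<open>w1\<close>.\<close>
definition gauss_test_risk :: "real \<Rightarrow> real \<Rightarrow> real \<Rightarrow> ennreal" where
  "gauss_test_risk w0 w1 c =
     (\<integral>\<^sup>+x. ennreal (min (w0 * std_normal_density x) (w1 * std_normal_density (x - c))) \<partial>lborel)"

lemma gauss_test_risk_mono: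
  assumes "0 \<le> w0" "0 \<le> w1" "w0 \<le> w0'" "w1 \<le> w1'"
  shows "gauss_test_risk w0 w1 c \<le> gauss_test_risk w0' w1' c"
  unfolding gauss_test_risk_def
  using assms by (intro nn_integral_mono ennreal_leI min.mono mult_right_mono) auto

lemma gauss_test_risk_scale:
  assumes "0 \<le> r"
  shows "gauss_test_risk (r * w0) (r * w1) c = ennreal r * gauss_test_risk w0 w1 c"
proof -
  have "min (r * w0 * u) (r * w1 * v) = r * min (w0 * u) (w1 * v)" for u v :: real
    using assms by (simp add: min_mult_distrib_left mult.assoc)
  then show ?thesis
    unfolding gauss_test_risk_def using assms
    by (simp add: ennreal_mult' nn_integral_cmult)
qed

text \<open>The threshold \<open>\<tau>\<close> is where the likelihood ratio of \<open>N(c,1)\<close> to \<open>N(0,1)\<close> equals \<open>w0 / w1\<close>.\<close>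
lemma gauss_test_risk_ge_tails:
  assumes w: "w0 > 0" "w1 > 0" and c: "c > 0"
  defines "\<tau> \<equiv> c / 2 + ln (w0 / w1) / c"
  shows "ennreal (w0 * gauss_tail 1 \<tau> + w1 * gauss_tail 1 (c - \<tau>)) \<le> gauss_test_risk w0 w1 c"
proof -
  have min_eq: "min (w0 * std_normal_density x) (w1 * std_normal_density (x - c))
      = (if \<tau> < x then w0 * std_normal_density x else w1 * std_normal_density (x - c))" for x
  proof -
    have "min 1 (exp (c * (x - \<tau>))) = (if \<tau> < x then 1 else exp (c * (x - \<tau>)))"
      using c by (auto simp: min_def zero_le_mult_iff)
    moreover have "min u (u * exp (c * (x - \<tau>))) = u * min 1 (exp (c * (x - \<tau>)))" if "0 \<le> u" for u
      using that by (metis min_mult_distrib_left mult.right_neutral)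
    ultimately show ?thesis
      unfolding weighted_std_normal_density_shift[OF w c, of x] \<tau>_def[symmetric] using w by simp
  qed
  have "ennreal (gauss_tail 1 (c - \<tau>)) \<le> (\<integral>\<^sup>+x. ennreal (std_normal_density x) * indicator {c - \<tau>..} x \<partial>lborel)"
    unfolding gauss_tail_nn_integral[OF zero_less_one] by (intro nn_integral_mono) (auto simp: indicator_def)
  also have "\<dots> = (\<integral>\<^sup>+x. ennreal (std_normal_density (x - c)) * indicator {..\<tau>} x \<partial>lborel)"
    by (subst nn_integral_real_affine[where c="-1" and t=c])
      (auto intro!: nn_integral_cong simp: std_normal_density_def indicator_def)
  finally have tail_right: "ennreal (gauss_tail 1 (c - \<tau>))
      \<le> (\<integral>\<^sup>+x. ennreal (std_normal_density (x - c)) * indicator {..\<tau>} x \<partial>lborel)" .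
  have "ennreal (w0 * gauss_tail 1 \<tau> + w1 * gauss_tail 1 (c - \<tau>))
      = ennreal w0 * ennreal (gauss_tail 1 \<tau>) + ennreal w1 * ennreal (gauss_tail 1 (c - \<tau>))"
    using w by (simp add: gauss_tail_def ennreal_plus ennreal_mult)
  also have "\<dots> \<le> ennreal w0 * (\<integral>\<^sup>+x. ennreal (std_normal_density x) * indicator {\<tau><..} x \<partial>lborel)
        + ennreal w1 * (\<integral>\<^sup>+x. ennreal (std_normal_density (x - c)) * indicator {..\<tau>} x \<partial>lborel)"
    using gauss_tail_nn_integral[OF zero_less_one, of \<tau>] tail_right by (simp add: mult_left_mono)
  also have "\<dots> = (\<integral>\<^sup>+x. ennreal w0 * (ennreal (std_normal_density x) * indicator {\<tau><..} x)
        + ennreal w1 * (ennreal (std_normal_density (x - c)) * indicator {..\<tau>} x) \<partial>lborel)"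
    by (simp add: nn_integral_add nn_integral_cmult)
  also have "\<dots> = (\<integral>\<^sup>+x. ennreal (min (w0 * std_normal_density x) (w1 * std_normal_density (x - c))) \<partial>lborel)"
    unfolding min_eq using w by (intro nn_integral_cong) (auto simp: indicator_def ennreal_mult)
  finally show ?thesis unfolding gauss_test_risk_def .
qed

lemma gauss_test_risk_half_half_ge: "ennreal (std_normal_density 1 / 2) \<le> gauss_test_risk (1/2) (1/2) 1"
proof -
  have "ennreal (std_normal_density 1 / 2) = (\<integral>\<^sup>+x. ennreal (std_normal_density 1 / 2) * indicator {0..1::real} x \<partial>lborel)"
    by (simp add: nn_integral_cmult_indicator)
  also have "\<dots> \<le> gauss_test_risk (1/2) (1/2) 1"
    unfolding gauss_test_risk_def
    by (intro nn_integral_mono) (auto intro!: ennreal_leI std_normal_density_one_le simp: indicator_def)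
  finally show ?thesis .
qed

lemma psi_nonneg: "0 \<le> psi p s a \<sigma>"
  unfolding psi_def gauss_tail_def by simp

lemma psi_le_gauss_test_risk:
  assumes \<sigma>: "\<sigma> > 0" and a: "a > 0" and s: "1 \<le> s" "s < p"
  shows "ennreal (psi p s a \<sigma> / p) \<le> gauss_test_risk (1 - s / p) (s / p) (a / \<sigma>)"
proof -
  have w: "1 - real s / p > 0" "real s / p > 0" using s by auto
  have "ln ((1 - real s / p) / (real s / p)) = ln (real p / real s - 1)"
    using s by (simp add: field_simps)
  then have "t_fun p s a \<sigma> / \<sigma> = a / \<sigma> / 2 + ln ((1 - real s / p) / (real s / p)) / (a / \<sigma>)"
    using \<sigma> a by (simp add: t_fun_def field_simps power2_eq_square)
  moreover have "(a - t_fun p s a \<sigma>) / \<sigma> = a / \<sigma> - t_fun p s a \<sigma> / \<sigma>"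
    by (simp add: diff_divide_distrib)
  moreover have "psi p s a \<sigma> / p = (1 - s / p) * gauss_tail 1 (t_fun p s a \<sigma> / \<sigma>)
      + s / p * gauss_tail 1 ((a - t_fun p s a \<sigma>) / \<sigma>)"
  proof -
    have "real (p - s) / p = 1 - s / p"
      using s by (simp add: of_nat_diff diff_divide_distrib)
    moreover have "psi p s a \<sigma> / p = real (p - s) / p * gauss_tail 1 (t_fun p s a \<sigma> / \<sigma>)
        + s / p * gauss_tail 1 ((a - t_fun p s a \<sigma>) / \<sigma>)"
      unfolding psi_def gauss_tail_scale[OF \<sigma>] using s by (simp add: field_simps)
    ultimately show ?thesis by simp
  qed
  ultimately show ?thesis
    using gauss_test_risk_ge_tails[OF w divide_pos_pos[OF a \<sigma>]] by simp
qed

lemma psi_le_gauss_test_risk_halved: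
  assumes \<sigma>: "\<sigma> > 0" and a: "a > 0" and s: "1 \<le> s" "s < p"
  shows "ennreal (psi p s a \<sigma> / (2 * real p))
           \<le> gauss_test_risk (1 - s / (2 * real p)) (s / (2 * real p)) (a / \<sigma>)"
proof -
  have "ennreal (psi p s a \<sigma> / (2 * real p)) = ennreal (1 / 2) * ennreal (psi p s a \<sigma> / p)"
    by (simp add: ennreal_mult'[symmetric] del: ennreal_half)
  also have "\<dots> \<le> ennreal (1 / 2) * gauss_test_risk (1 - s / p) (s / p) (a / \<sigma>)"
    using psi_le_gauss_test_risk[OF \<sigma> a s] by (rule mult_left_mono) simp
  also have "\<dots> = gauss_test_risk (1 / 2 * (1 - s / p)) (1 / 2 * (s / p)) (a / \<sigma>)"
    by (rule gauss_test_risk_scale[symmetric]) simp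
  also have "\<dots> \<le> gauss_test_risk (1 - s / (2 * real p)) (s / (2 * real p)) (a / \<sigma>)"
    using s by (intro gauss_test_risk_mono) auto
  finally show ?thesis .
qed

section \<open>Two-point lower bounds for one coordinate\<close>

lemma mult_min_le_weighted_sum:
  fixes K A B u v :: real
  assumes "0 \<le> A" "0 \<le> B" "0 \<le> u" "0 \<le> v" "K \<le> A \<or> K \<le> B"
  shows "K * min u v \<le> u * A + v * B"
proof (cases "K \<le> A")
  case True
  have "K * min u v \<le> A * min u v" using True assms by (intro mult_right_mono) auto
  also have "\<dots> \<le> A * u" using assms by (intro mult_left_mono) auto
  finally show ?thesis using assms by (simp add: mult.commute add_increasing2)
next
  case False
  then have "K \<le> B" using assms by blast
  then have "K * min u v \<le> B * min u v" using assms by (intro mult_right_mono) auto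
  also have "\<dots> \<le> B * v" using assms by (intro mult_left_mono) auto
  finally show ?thesis using assms by (simp add: mult.commute add_increasing)
qed

lemma two_point_lower_bound:
  fixes d :: "real \<Rightarrow> real"
  assumes d [measurable]: "d \<in> borel_measurable borel"
    and \<sigma>: "\<sigma> > 0" and m: "m0 < m1" and w: "0 \<le> w0" "0 \<le> w1" and q: "q > 0"
  shows "ennreal (((m1 - m0) / 2) powr q) * gauss_test_risk w0 w1 ((m1 - m0) / \<sigma>)
     \<le> ennreal w0 * (\<integral>\<^sup>+x. ennreal (\<bar>d (m0 + \<sigma> * x) - m0\<bar> powr q) \<partial>std_gauss)
       + ennreal w1 * (\<integral>\<^sup>+x. ennreal (\<bar>d (m1 + \<sigma> * x) - m1\<bar> powr q) \<partial>std_gauss)"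
proof -
  define c where "c = (m1 - m0) / \<sigma>"
  define err where "err m x = \<bar>d (m0 + \<sigma> * x) - m\<bar> powr q" for m x
  have risk1: "(\<integral>\<^sup>+x. ennreal (\<bar>d (m1 + \<sigma> * x) - m1\<bar> powr q) \<partial>std_gauss)
      = (\<integral>\<^sup>+x. ennreal (std_normal_density (x - c)) * ennreal (err m1 x) \<partial>lborel)"
    unfolding c_def err_def by (rule nn_integral_std_gauss_recenter[OF _ \<sigma>]) simp
  have risk0: "(\<integral>\<^sup>+x. ennreal (\<bar>d (m0 + \<sigma> * x) - m0\<bar> powr q) \<partial>std_gauss)
      = (\<integral>\<^sup>+x. ennreal (std_normal_density x) * ennreal (err m0 x) \<partial>lborel)"
    by (simp add: nn_integral_std_gauss err_def)
  have "ennreal (((m1 - m0) / 2) powr q) * gauss_test_risk w0 w1 c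
      = (\<integral>\<^sup>+x. ennreal (((m1 - m0) / 2) powr q
                 * min (w0 * std_normal_density x) (w1 * std_normal_density (x - c))) \<partial>lborel)"
    unfolding gauss_test_risk_def using w
    by (subst nn_integral_cmult[symmetric]) (auto simp: ennreal_mult)
  also have "\<dots> \<le> (\<integral>\<^sup>+x. ennreal (w0 * std_normal_density x * err m0 x
                        + w1 * std_normal_density (x - c) * err m1 x) \<partial>lborel)"
  proof (intro nn_integral_mono ennreal_leI mult_min_le_weighted_sum)
    fix x
    have "(m1 - m0) / 2 \<le> \<bar>d (m0 + \<sigma> * x) - m0\<bar> \<or> (m1 - m0) / 2 \<le> \<bar>d (m0 + \<sigma> * x) - m1\<bar>"
      by (auto simp: abs_if)
    then show "((m1 - m0) / 2) powr q \<le> err m0 x \<or> ((m1 - m0) / 2) powr q \<le> err m1 x"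
      unfolding err_def using m q by (meson powr_mono2 less_imp_le half_gt_zero diff_gt_0_iff_gt)
  qed (use w in \<open>auto simp: err_def\<close>)
  also have "\<dots> = ennreal w0 * (\<integral>\<^sup>+x. ennreal (std_normal_density x) * ennreal (err m0 x) \<partial>lborel)
       + ennreal w1 * (\<integral>\<^sup>+x. ennreal (std_normal_density (x - c)) * ennreal (err m1 x) \<partial>lborel)"
    using w unfolding err_def
    by (simp add: ennreal_plus ennreal_mult mult.assoc nn_integral_add nn_integral_cmult)
  finally show ?thesis unfolding risk0 risk1 c_def .
qed

lemma sets_gauss_vec: "sets (gauss_vec p) = sets (PiM {..<p} (\<lambda>_. lborel))"
  unfolding gauss_vec_def by (rule sets_PiM_cong) (auto simp: sets_std_gauss)

lemma observation_measurable:
  "(\<lambda>\<xi>. restrict (\<lambda>j. \<beta> j + \<sigma> * \<xi> j) {..<p}) \<in> measurable (gauss_vec p) (PiM {..<p} (\<lambda>_. lborel))"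
  by (subst measurable_cong_sets[OF sets_gauss_vec refl]) measurable

lemma estimator_coord_measurable:
  "est \<in> estimators p \<Longrightarrow> i < p \<Longrightarrow> (\<lambda>y. est y i) \<in> borel_measurable (PiM {..<p} (\<lambda>_. lborel))"
  unfolding estimators_def by blast

definition coord_loss ::
    "nat \<Rightarrow> real \<Rightarrow> real \<Rightarrow> ((nat \<Rightarrow> real) \<Rightarrow> (nat \<Rightarrow> real)) \<Rightarrow> (nat \<Rightarrow> real) \<Rightarrow> nat
      \<Rightarrow> (nat \<Rightarrow> real) \<Rightarrow> ennreal" where
  "coord_loss p q \<sigma> est \<beta> i \<xi> = ennreal (\<bar>est (restrict (\<lambda>j. \<beta> j + \<sigma> * \<xi> j) {..<p}) i - \<beta> i\<bar> powr q)"

definition coord_risk ::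
    "nat \<Rightarrow> real \<Rightarrow> real \<Rightarrow> ((nat \<Rightarrow> real) \<Rightarrow> (nat \<Rightarrow> real)) \<Rightarrow> (nat \<Rightarrow> real) \<Rightarrow> nat \<Rightarrow> ennreal" where
  "coord_risk p q \<sigma> est \<beta> i = (\<integral>\<^sup>+\<xi>. coord_loss p q \<sigma> est \<beta> i \<xi> \<partial>gauss_vec p)"

lemma coord_loss_measurable [measurable]:
  assumes "est \<in> estimators p" "i < p"
  shows "coord_loss p q \<sigma> est \<beta> i \<in> borel_measurable (gauss_vec p)"
  using measurable_comp[OF observation_measurable estimator_coord_measurable[OF assms]]
  unfolding coord_loss_def[abs_def] by (simp add: o_def)

lemma sum_coord_risk_le_risk:
  assumes est: "est \<in> estimators p" and I: "I \<subseteq> {..<p}"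
  shows "(\<Sum>i\<in>I. coord_risk p q \<sigma> est \<beta> i) \<le> risk p q \<sigma> est \<beta>"
proof -
  have "(\<Sum>i\<in>I. coord_risk p q \<sigma> est \<beta> i) \<le> (\<Sum>i<p. coord_risk p q \<sigma> est \<beta> i)"
    using I by (intro sum_mono2) auto
  also have "\<dots> = (\<integral>\<^sup>+\<xi>. (\<Sum>i<p. coord_loss p q \<sigma> est \<beta> i \<xi>) \<partial>gauss_vec p)"
    unfolding coord_risk_def using est by (intro nn_integral_sum[symmetric]) auto
  also have "\<dots> = risk p q \<sigma> est \<beta>"
    unfolding risk_def coord_loss_def by (simp add: sum_ennreal)
  finally show ?thesis .
qed

lemma coord_loss_section_lower_bound:
  assumes est: "est \<in> estimators p" and i: "i < p" and \<sigma>: "\<sigma> > 0" and m: "m0 < m1"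
    and w: "0 \<le> w0" "0 \<le> w1" and q: "q > 0" and \<beta>: "\<beta> i = m0"
  shows "ennreal (((m1 - m0) / 2) powr q) * gauss_test_risk w0 w1 ((m1 - m0) / \<sigma>)
     \<le> (\<integral>\<^sup>+y. ennreal w0 * coord_loss p q \<sigma> est \<beta> i (x(i := y))
              + ennreal w1 * coord_loss p q \<sigma> est (\<beta>(i := m1)) i (x(i := y)) \<partial>std_gauss)"
proof -
  define d where "d z = est (restrict (\<lambda>j. if j = i then z else \<beta> j + \<sigma> * x j) {..<p}) i" for z
  have "(\<lambda>z. restrict (\<lambda>j. if j = i then z else \<beta> j + \<sigma> * x j) {..<p})
      \<in> measurable borel (PiM {..<p} (\<lambda>_. lborel))"
    by measurable
  from measurable_comp[OF this estimator_coord_measurable[OF est i]]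
  have d: "d \<in> borel_measurable borel"
    by (simp add: d_def[abs_def] o_def)
  have "restrict (\<lambda>j. \<beta> j + \<sigma> * (x(i := y)) j) {..<p}
      = restrict (\<lambda>j. if j = i then m0 + \<sigma> * y else \<beta> j + \<sigma> * x j) {..<p}" for y
    using \<beta> by (intro restrict_ext) auto
  then have loss0: "coord_loss p q \<sigma> est \<beta> i (x(i := y)) = ennreal (\<bar>d (m0 + \<sigma> * y) - m0\<bar> powr q)" for y
    using \<beta> by (simp add: coord_loss_def d_def)
  have "restrict (\<lambda>j. (\<beta>(i := m1)) j + \<sigma> * (x(i := y)) j) {..<p}
      = restrict (\<lambda>j. if j = i then m1 + \<sigma> * y else \<beta> j + \<sigma> * x j) {..<p}" for y
    by (intro restrict_ext) auto
  then have loss1: "coord_loss p q \<sigma> est (\<beta>(i := m1)) i (x(i := y)) = ennreal (\<bar>d (m1 + \<sigma> * y) - m1\<bar> powr q)"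
    for y by (simp add: coord_loss_def d_def)
  show ?thesis
    unfolding loss0 loss1 using two_point_lower_bound[OF d \<sigma> m w q] d
    by (simp add: nn_integral_add nn_integral_cmult)
qed

lemma coord_risk_two_point_lower_bound:
  assumes est: "est \<in> estimators p" and i: "i < p" and \<sigma>: "\<sigma> > 0" and m: "m0 < m1"
    and w: "0 \<le> w0" "0 \<le> w1" and q: "q > 0" and \<beta>: "\<beta> i = m0"
  shows "ennreal (((m1 - m0) / 2) powr q) * gauss_test_risk w0 w1 ((m1 - m0) / \<sigma>)
     \<le> ennreal w0 * coord_risk p q \<sigma> est \<beta> i + ennreal w1 * coord_risk p q \<sigma> est (\<beta>(i := m1)) i"
    (is "?K \<le> _")
proof -
  interpret product_prob_space "\<lambda>_. std_gauss"
    by (simp add: product_prob_space_def product_prob_space_axioms_def product_sigma_finite_def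
        prob_space_imp_sigma_finite prob_space_std_gauss)
  define J where "J = {..<p} - {i}"
  have J: "finite J" "i \<notin> J" "insert i J = {..<p}" using i by (auto simp: J_def)
  define G where "G \<xi> = ennreal w0 * coord_loss p q \<sigma> est \<beta> i \<xi>
      + ennreal w1 * coord_loss p q \<sigma> est (\<beta>(i := m1)) i \<xi>" for \<xi>
  have G: "G \<in> borel_measurable (PiM (insert i J) (\<lambda>_. std_gauss))"
    unfolding G_def J(3) gauss_vec_def[symmetric] using est i by measurable
  have "ennreal w0 * coord_risk p q \<sigma> est \<beta> i + ennreal w1 * coord_risk p q \<sigma> est (\<beta>(i := m1)) i
      = (\<integral>\<^sup>+\<xi>. G \<xi> \<partial>PiM (insert i J) (\<lambda>_. std_gauss))"
    unfolding G_def J(3) gauss_vec_def[symmetric] coord_risk_def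
    using est i by (simp add: nn_integral_add nn_integral_cmult)
  also have "\<dots> = (\<integral>\<^sup>+x. (\<integral>\<^sup>+y. G (x(i := y)) \<partial>std_gauss) \<partial>PiM J (\<lambda>_. std_gauss))"
    by (rule product_nn_integral_insert[OF J(1,2) G])
  also have "\<dots> \<ge> (\<integral>\<^sup>+x. ?K \<partial>PiM J (\<lambda>_. std_gauss))"
    unfolding G_def
    by (intro nn_integral_mono coord_loss_section_lower_bound[where \<beta> = \<beta>, OF est i \<sigma> m w q \<beta>])
  also have "(\<integral>\<^sup>+x. ?K \<partial>PiM J (\<lambda>_. std_gauss)) = ?K"
    by (simp add: prob_space.emeasure_space_1 prob_space_PiM prob_space_std_gauss)
  finally show ?thesis .
qed

section \<open>Priors with random support\<close>

text \<open>The probability that a random subset of an \<open>n\<close>-element set, containing each element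
  independently with probability \<open>\<pi>\<close>, equals \<open>S\<close>.\<close>
definition binom_weight :: "real \<Rightarrow> nat \<Rightarrow> 'a set \<Rightarrow> real" where
  "binom_weight \<pi> n S = \<pi> ^ card S * (1 - \<pi>) ^ (n - card S)"

lemma binom_weight_nonneg: "0 \<le> \<pi> \<Longrightarrow> \<pi> \<le> 1 \<Longrightarrow> 0 \<le> binom_weight \<pi> n S"
  by (simp add: binom_weight_def)

lemma binom_weight_Suc: "card S \<le> n \<Longrightarrow> binom_weight \<pi> (Suc n) S = (1 - \<pi>) * binom_weight \<pi> n S"
  by (simp add: binom_weight_def Suc_diff_le)

lemma binom_weight_Suc_insert:
  "finite S \<Longrightarrow> x \<notin> S \<Longrightarrow> binom_weight \<pi> (Suc n) (insert x S) = \<pi> * binom_weight \<pi> n S"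
  by (simp add: binom_weight_def)

lemma sum_binom_weight:
  assumes "finite A"
  shows "(\<Sum>S\<in>Pow A. binom_weight \<pi> (card A) S) = 1"
proof -
  have "(\<Sum>S\<in>Pow A. binom_weight \<pi> (card A) S) = (\<Sum>S\<in>Pow A. (\<Prod>x\<in>S. \<pi>) * (\<Prod>x\<in>A - S. 1 - \<pi>))"
    using assms by (intro sum.cong) (auto simp: binom_weight_def card_Diff_subset finite_subset)
  also have "\<dots> = (\<Prod>x\<in>A. \<pi> + (1 - \<pi>))"
    by (rule prod_add[OF assms, symmetric])
  finally show ?thesis by simp
qed

lemma sum_Pow_insert:
  assumes "finite A" "x \<notin> A"
  shows "(\<Sum>S\<in>Pow (insert x A). f S) = (\<Sum>S\<in>Pow A. f S) + (\<Sum>S\<in>Pow A. f (insert x S))"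
proof -
  have "inj_on (insert x) (Pow A)"
    using assms by (intro inj_onI) (metis PowD insert_ident subsetD)
  then show ?thesis
    unfolding Pow_insert using assms by (subst sum.union_disjoint) (auto simp: sum.reindex)
qed

lemma sum_card_binom_weight:
  assumes "finite A"
  shows "(\<Sum>S\<in>Pow A. real (card S) * binom_weight \<pi> (card A) S) = real (card A) * \<pi>"
  using assms
proof (induction A rule: finite_induct)
  case empty
  then show ?case by simp
next
  case (insert x A)
  have card_le: "card S \<le> card A" and fin: "finite S" and notin: "x \<notin> S" if "S \<in> Pow A" for S
    using that insert.hyps by (auto intro: card_mono finite_subset)
  have "(\<Sum>S\<in>Pow (insert x A). real (card S) * binom_weight \<pi> (card (insert x A)) S)
      = (1 - \<pi>) * (\<Sum>S\<in>Pow A. real (card S) * binom_weight \<pi> (card A) S)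
        + \<pi> * (\<Sum>S\<in>Pow A. real (card S) * binom_weight \<pi> (card A) S + binom_weight \<pi> (card A) S)"
    using insert.hyps card_le fin notin
    by (simp add: sum_Pow_insert binom_weight_Suc binom_weight_Suc_insert sum_distrib_left algebra_simps)
  also have "\<dots> = real (card (insert x A)) * \<pi>"
    using insert by (simp add: sum.distrib sum_binom_weight algebra_simps)
  finally show ?case .
qed

lemma sum_binom_weight_le_one:
  assumes "finite A" "0 \<le> \<pi>" "\<pi> \<le> 1" "F \<subseteq> Pow A"
  shows "(\<Sum>S\<in>F. binom_weight \<pi> (card A) S) \<le> 1"
proof -
  have "(\<Sum>S\<in>F. binom_weight \<pi> (card A) S) \<le> (\<Sum>S\<in>Pow A. binom_weight \<pi> (card A) S)"
    using assms by (intro sum_mono2) (auto simp: binom_weight_nonneg)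
  then show ?thesis using sum_binom_weight[OF assms(1)] by simp
qed

definition binom_prob_card_less :: "real \<Rightarrow> nat \<Rightarrow> 'a set \<Rightarrow> real" where
  "binom_prob_card_less \<pi> k A = (\<Sum>T | T \<subseteq> A \<and> card T < k. binom_weight \<pi> (card A) T)"

text \<open>Markov's inequality for the size of the random subset.\<close>
lemma binom_prob_card_less_ge:
  assumes "finite A" "0 \<le> \<pi>" "\<pi> \<le> 1" "k > 0"
  shows "1 - real (card A) * \<pi> / k \<le> binom_prob_card_less \<pi> k A"
proof -
  let ?w = "binom_weight \<pi> (card A)"
  let ?small = "{T. T \<subseteq> A \<and> card T < k}" and ?large = "{T. T \<subseteq> A \<and> \<not> card T < k}"
  have "(\<Sum>T\<in>?large. ?w T) \<le> (\<Sum>T\<in>?large. real (card T) / k * ?w T)"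
  proof (intro sum_mono)
    fix T assume "T \<in> ?large"
    then have "1 \<le> real (card T) / k" using assms by simp
    from mult_right_mono[OF this binom_weight_nonneg[OF assms(2,3)]]
    show "?w T \<le> real (card T) / k * ?w T" by simp
  qed
  also have "\<dots> \<le> (\<Sum>T\<in>Pow A. real (card T) / k * ?w T)"
    using assms by (intro sum_mono2) (auto simp: binom_weight_nonneg)
  also have "\<dots> = real (card A) * \<pi> / k"
    using sum_card_binom_weight[OF assms(1)] by (simp add: sum_divide_distrib[symmetric])
  finally have "(\<Sum>T\<in>?large. ?w T) \<le> real (card A) * \<pi> / k" .
  moreover have "(\<Sum>T\<in>?small. ?w T) + (\<Sum>T\<in>?large. ?w T) = 1"
  proof -
    have "?small \<union> ?large = Pow A" by auto
    then show ?thesis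
      using assms sum_binom_weight[OF assms(1), of \<pi>] by (subst sum.union_disjoint[symmetric]) auto
  qed
  ultimately show ?thesis
    unfolding binom_prob_card_less_def by linarith
qed

text \<open>Splitting a random subset \<open>S\<close> according to whether \<open>i \<in> S\<close> pairs each \<open>T \<subseteq> I - {i}\<close>
  with \<open>insert i T\<close>.\<close>
lemma binom_weight_pairing_le:
  fixes lo :: "'a set \<Rightarrow> 'a \<Rightarrow> ennreal"
  assumes I: "finite I" and i: "i \<in> I" and \<pi>: "0 \<le> \<pi>" "\<pi> \<le> 1"
    and B: "\<And>T. T \<subseteq> I - {i} \<Longrightarrow> card T < k \<Longrightarrow>
              B \<le> ennreal (1 - \<pi>) * lo T i + ennreal \<pi> * lo (insert i T) i"
  shows "ennreal (binom_prob_card_less \<pi> k (I - {i})) * B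
      \<le> (\<Sum>S | S \<subseteq> I \<and> card S \<le> k. ennreal (binom_weight \<pi> (card I) S) * lo S i)"
proof -
  let ?F = "{S. S \<subseteq> I \<and> card S \<le> k}"
  let ?w = "binom_weight \<pi> (card I)"
  let ?G = "{T. T \<subseteq> I - {i} \<and> card T < k}"
  let ?v = "binom_weight \<pi> (card (I - {i}))"
  have cI: "card I = Suc (card (I - {i}))"
    by (rule card_Suc_Diff1[OF I i, symmetric])
  have T: "finite T" "i \<notin> T" "card T \<le> card (I - {i})" if "T \<in> ?G" for T
    using that I by (auto intro: card_mono finite_subset)
  have inj: "inj_on (insert i) ?G"
    by (intro inj_onI) (metis Diff_iff insert_ident mem_Collect_eq singletonI subsetD)
  have "?G \<union> insert i ` ?G \<subseteq> ?F"
    using I i by (auto simp: card_insert_if finite_subset)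
  have "ennreal (\<Sum>T\<in>?G. ?v T) * B = (\<Sum>T\<in>?G. ennreal (?v T) * B)"
    by (subst sum_ennreal[symmetric], simp add: \<pi> binom_weight_nonneg, simp add: sum_distrib_right)
  also have "\<dots> \<le> (\<Sum>T\<in>?G. ennreal (?v T) * (ennreal (1 - \<pi>) * lo T i + ennreal \<pi> * lo (insert i T) i))"
    using B by (intro sum_mono mult_left_mono) auto
  also have "\<dots> = (\<Sum>T\<in>?G. ennreal (?w T) * lo T i) + (\<Sum>T\<in>?G. ennreal (?w (insert i T)) * lo (insert i T) i)"
    unfolding sum.distrib[symmetric]
  proof (rule sum.cong[OF refl])
    fix T assume "T \<in> ?G"
    have w: "?w T = (1 - \<pi>) * ?v T" "?w (insert i T) = \<pi> * ?v T"
      unfolding cI using T[OF \<open>T \<in> ?G\<close>] by (auto intro: binom_weight_Suc binom_weight_Suc_insert)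
    show "ennreal (?v T) * (ennreal (1 - \<pi>) * lo T i + ennreal \<pi> * lo (insert i T) i)
        = ennreal (?w T) * lo T i + ennreal (?w (insert i T)) * lo (insert i T) i"
      unfolding w using \<pi> by (simp add: ennreal_mult' distrib_left mult.assoc mult.left_commute)
  qed
  also have "\<dots> = (\<Sum>S\<in>?G \<union> insert i ` ?G. ennreal (?w S) * lo S i)"
    using I inj by (subst sum.union_disjoint) (auto simp: sum.reindex)
  also have "\<dots> \<le> (\<Sum>S\<in>?F. ennreal (?w S) * lo S i)"
    using I \<open>?G \<union> insert i ` ?G \<subseteq> ?F\<close> by (intro sum_mono2) auto
  finally show ?thesis unfolding binom_prob_card_less_def .
qed

lemma sum_binom_weight_pairs_le:
  fixes lo :: "'a set \<Rightarrow> 'a \<Rightarrow> ennreal"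
  assumes I: "finite I" and \<pi>: "0 \<le> \<pi>" "\<pi> \<le> 1"
    and B: "\<And>i T. i \<in> I \<Longrightarrow> T \<subseteq> I - {i} \<Longrightarrow> card T < k \<Longrightarrow>
              B \<le> ennreal (1 - \<pi>) * lo T i + ennreal \<pi> * lo (insert i T) i"
  shows "(\<Sum>i\<in>I. ennreal (binom_prob_card_less \<pi> k (I - {i})) * B)
      \<le> (\<Sum>S | S \<subseteq> I \<and> card S \<le> k. ennreal (binom_weight \<pi> (card I) S) * (\<Sum>i\<in>I. lo S i))"
proof -
  have "(\<Sum>i\<in>I. ennreal (binom_prob_card_less \<pi> k (I - {i})) * B)
      \<le> (\<Sum>i\<in>I. \<Sum>S | S \<subseteq> I \<and> card S \<le> k. ennreal (binom_weight \<pi> (card I) S) * lo S i)"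
    using binom_weight_pairing_le[OF I _ \<pi>] B by (intro sum_mono) auto
  also have "\<dots> = (\<Sum>S | S \<subseteq> I \<and> card S \<le> k. ennreal (binom_weight \<pi> (card I) S) * (\<Sum>i\<in>I. lo S i))"
    by (subst sum.swap) (simp add: sum_distrib_left)
  finally show ?thesis .
qed

lemma risk_lower_bound_binom_prior:
  fixes \<beta> :: "nat set \<Rightarrow> nat \<Rightarrow> real"
  assumes est: "est \<in> estimators p" and \<sigma>: "\<sigma> > 0" and m: "m0 < m1" and q: "q > 0"
    and \<pi>: "0 \<le> \<pi>" "\<pi> \<le> 1" and I: "I \<subseteq> {..<p}"
    and base: "\<And>i T. i \<in> I \<Longrightarrow> T \<subseteq> I - {i} \<Longrightarrow> \<beta> T i = m0"
    and step: "\<And>i T. i \<in> I \<Longrightarrow> T \<subseteq> I - {i} \<Longrightarrow> \<beta> (insert i T) = (\<beta> T)(i := m1)"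
    and M: "\<And>S. S \<subseteq> I \<Longrightarrow> card S \<le> k \<Longrightarrow> risk p q \<sigma> est (\<beta> S) \<le> M"
  shows "(\<Sum>i\<in>I. ennreal (binom_prob_card_less \<pi> k (I - {i})))
           * (ennreal (((m1 - m0) / 2) powr q) * gauss_test_risk (1 - \<pi>) \<pi> ((m1 - m0) / \<sigma>)) \<le> M"
proof -
  let ?F = "{S. S \<subseteq> I \<and> card S \<le> k}"
  let ?w = "binom_weight \<pi> (card I)"
  have fin: "finite I" using I finite_subset by blast
  have "(\<Sum>i\<in>I. ennreal (binom_prob_card_less \<pi> k (I - {i})))
           * (ennreal (((m1 - m0) / 2) powr q) * gauss_test_risk (1 - \<pi>) \<pi> ((m1 - m0) / \<sigma>))
      \<le> (\<Sum>S\<in>?F. ennreal (?w S) * (\<Sum>i\<in>I. coord_risk p q \<sigma> est (\<beta> S) i))"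
    unfolding sum_distrib_right
  proof (rule sum_binom_weight_pairs_le[OF fin \<pi>])
    fix i T assume "i \<in> I" "T \<subseteq> I - {i}"
    then show "ennreal (((m1 - m0) / 2) powr q) * gauss_test_risk (1 - \<pi>) \<pi> ((m1 - m0) / \<sigma>)
        \<le> ennreal (1 - \<pi>) * coord_risk p q \<sigma> est (\<beta> T) i + ennreal \<pi> * coord_risk p q \<sigma> est (\<beta> (insert i T)) i"
      using coord_risk_two_point_lower_bound[OF est _ \<sigma> m _ \<pi>(1) q base] I \<pi> step by auto
  qed
  also have "\<dots> \<le> (\<Sum>S\<in>?F. ennreal (?w S) * M)"
    using order.trans[OF sum_coord_risk_le_risk[OF est I] M] by (intro sum_mono mult_left_mono) auto
  also have "\<dots> = ennreal (\<Sum>S\<in>?F. ?w S) * M"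
    by (subst sum_ennreal[symmetric], simp add: \<pi> binom_weight_nonneg, simp add: sum_distrib_right)
  also have "\<dots> \<le> 1 * M"
    using sum_binom_weight_le_one[OF fin \<pi>, of ?F] by (intro mult_right_mono) auto
  finally show ?thesis by simp
qed

lemma sum_binom_prob_card_less_ge_half:
  assumes s: "1 \<le> s" "s \<le> p"
  shows "ennreal (real p / 2) \<le> (\<Sum>i<p. ennreal (binom_prob_card_less (s / (2 * real p)) s ({..<p} - {i})))"
proof -
  have "1 / 2 \<le> binom_prob_card_less (s / (2 * real p)) s ({..<p} - {i})" if "i < p" for i
  proof -
    have "1 / 2 \<le> 1 - real (card ({..<p} - {i})) * (s / (2 * real p)) / s"
      using that s by (simp add: of_nat_diff field_simps)
    also have "\<dots> \<le> binom_prob_card_less (s / (2 * real p)) s ({..<p} - {i})"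
      using that s by (intro binom_prob_card_less_ge) auto
    finally show ?thesis .
  qed
  then have "(\<Sum>i<p. ennreal (1 / 2)) \<le> (\<Sum>i<p. ennreal (binom_prob_card_less (s / (2 * real p)) s ({..<p} - {i})))"
    by (intro sum_mono ennreal_leI) simp
  moreover have "(\<Sum>i<p. ennreal (1 / 2)) = ennreal (real p / 2)"
    by (simp add: ennreal_of_nat_eq_real_of_nat ennreal_mult'[symmetric] del: ennreal_half)
  ultimately show ?thesis by simp
qed

text \<open>The prior puts the value \<open>a\<close> on a random set of coordinates of mean size \<open>s / 2\<close>.\<close>
lemma sup_risk_ge_psi:
  assumes est: "est \<in> estimators p" and \<sigma>: "\<sigma> > 0" and a: "a > 0" and s: "1 \<le> s" "s < p"
    and q: "q > 0"
  shows "ennreal ((a / 2) powr q * psi p s a \<sigma> / 4) \<le> (SUP \<beta>\<in>Omega p s a. risk p q \<sigma> est \<beta>)"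
proof -
  define \<pi> where "\<pi> = real s / (2 * real p)"
  define \<beta> where "\<beta> S j = (if j \<in> S then a else 0)" for S :: "nat set" and j
  have \<pi>: "0 \<le> \<pi>" "\<pi> \<le> 1" using s by (auto simp: \<pi>_def)
  have \<beta>_Omega: "\<beta> S \<in> Omega p s a" if "S \<subseteq> {..<p}" "card S \<le> s" for S
  proof -
    have "{i. \<beta> S i \<noteq> 0} = S" using a by (auto simp: \<beta>_def)
    then show ?thesis using that a by (auto simp: Omega_def \<beta>_def)
  qed
  have "ennreal ((a / 2) powr q * psi p s a \<sigma> / 4)
      = ennreal (real p / 2) * (ennreal ((a / 2) powr q) * ennreal (psi p s a \<sigma> / (2 * real p)))"
    using s psi_nonneg by (simp add: ennreal_mult'[symmetric] field_simps)
  also have "\<dots> \<le> (\<Sum>i<p. ennreal (binom_prob_card_less \<pi> s ({..<p} - {i})))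
      * (ennreal (((a - 0) / 2) powr q) * gauss_test_risk (1 - \<pi>) \<pi> ((a - 0) / \<sigma>))"
    unfolding \<pi>_def using sum_binom_prob_card_less_ge_half[OF s(1) less_imp_le[OF s(2)]] psi_le_gauss_test_risk_halved[OF \<sigma> a s]
    by (intro mult_mono) auto
  also have "\<dots> \<le> (SUP \<beta>\<in>Omega p s a. risk p q \<sigma> est \<beta>)"
  proof (rule risk_lower_bound_binom_prior[OF est \<sigma> a q \<pi>])
    show "risk p q \<sigma> est (\<beta> S) \<le> (SUP \<beta>\<in>Omega p s a. risk p q \<sigma> est \<beta>)"
      if "S \<subseteq> {..<p}" "card S \<le> s" for S
      using \<beta>_Omega[OF that] by (rule SUP_upper)
  qed (auto simp: \<beta>_def)
  finally show ?thesis .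
qed

text \<open>The prior raises each of the first \<open>s\<close> coordinates of \<open>(a, \<dots>, a, 0, \<dots>, 0)\<close> by \<open>\<sigma>\<close>
  independently with probability \<open>1 / 2\<close>.\<close>
lemma sup_risk_ge_noise:
  assumes est: "est \<in> estimators p" and \<sigma>: "\<sigma> > 0" and a: "a > 0" and s: "s \<le> p" and q: "q > 0"
  shows "ennreal (real s * (\<sigma> / 2) powr q * (std_normal_density 1 / 2))
           \<le> (SUP \<beta>\<in>Omega p s a. risk p q \<sigma> est \<beta>)"
proof -
  define \<beta> where "\<beta> S j = (if j < s then a else 0) + (if j \<in> S then \<sigma> else 0)" for S :: "nat set" and j
  have \<beta>_Omega: "\<beta> S \<in> Omega p s a" if "S \<subseteq> {..<s}" for S
  proof -
    have "{i. \<beta> S i \<noteq> 0} = {..<s}" using a \<sigma> that by (auto simp: \<beta>_def)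
    then show ?thesis using a \<sigma> s that by (auto simp: Omega_def \<beta>_def)
  qed
  have "(\<Sum>i<s. ennreal (binom_prob_card_less (1 / 2) s ({..<s} - {i})))
      * (ennreal (((a + \<sigma> - a) / 2) powr q) * gauss_test_risk (1 - 1 / 2) (1 / 2) ((a + \<sigma> - a) / \<sigma>))
      \<le> (SUP \<beta>\<in>Omega p s a. risk p q \<sigma> est \<beta>)"
  proof (rule risk_lower_bound_binom_prior[OF est \<sigma> _ q])
    show "risk p q \<sigma> est (\<beta> S) \<le> (SUP \<beta>\<in>Omega p s a. risk p q \<sigma> est \<beta>)"
      if "S \<subseteq> {..<s}" "card S \<le> s" for S
      using \<beta>_Omega[OF that(1)] by (rule SUP_upper)
  qed (use \<sigma> s in \<open>auto simp: \<beta>_def\<close>)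
  moreover have "binom_prob_card_less (1 / 2) s ({..<s} - {i}) = 1"
    if "i < s" for i
  proof -
    have "{T. T \<subseteq> {..<s} - {i} \<and> card T < s} = Pow ({..<s} - {i})"
      using that by (auto dest: card_mono[rotated] simp: less_Suc_eq_le)
    then show ?thesis by (simp add: binom_prob_card_less_def sum_binom_weight)
  qed
  ultimately have bayes: "ennreal (real s) * (ennreal ((\<sigma> / 2) powr q) * gauss_test_risk (1 / 2) (1 / 2) 1)
      \<le> (SUP \<beta>\<in>Omega p s a. risk p q \<sigma> est \<beta>)"
    using \<sigma> by (simp add: ennreal_of_nat_eq_real_of_nat)
  have "ennreal (real s * (\<sigma> / 2) powr q * (std_normal_density 1 / 2))
      = ennreal (real s) * (ennreal ((\<sigma> / 2) powr q) * ennreal (std_normal_density 1 / 2))"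
    by (simp only: ennreal_mult' mult.assoc of_nat_0_le_iff powr_ge_zero)
  also have "\<dots> \<le> ennreal (real s) * (ennreal ((\<sigma> / 2) powr q) * gauss_test_risk (1 / 2) (1 / 2) 1)"
    by (intro mult_left_mono gauss_test_risk_half_half_ge) simp_all
  finally show ?thesis using bayes by (rule order.trans)
qed

section \<open>The regimes of Phi\<close>

lemma abs_powr_le_one_plus_power:
  fixes y q :: real
  assumes "1 \<le> q"
  shows "\<bar>y\<bar> powr q \<le> 1 + y ^ (2 * nat \<lceil>q\<rceil>)"
proof (cases "\<bar>y\<bar> \<le> 1")
  case True
  then have "\<bar>y\<bar> powr q \<le> 1 powr q"
    using assms by (intro powr_mono2) auto
  then have "\<bar>y\<bar> powr q \<le> 1"
    by simp
  moreover have "0 \<le> y ^ (2 * nat \<lceil>q\<rceil>)"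
    by (simp add: power_mult)
  ultimately show ?thesis by linarith
next
  case False
  have "\<bar>y\<bar> powr q \<le> \<bar>y\<bar> powr real (2 * nat \<lceil>q\<rceil>)"
    using False assms by (intro powr_mono) linarith+
  also have "\<dots> = \<bar>y\<bar> ^ (2 * nat \<lceil>q\<rceil>)"
    using False by (subst powr_realpow) auto
  also have "\<dots> = y ^ (2 * nat \<lceil>q\<rceil>)"
    by (simp add: power_mult)
  finally show ?thesis by simp
qed

text \<open>One plus the moment \<open>E \<xi>^(2 \<lceil>q\<rceil>)\<close> of a standard Gaussian \<open>\<xi>\<close>.\<close>
definition gauss_moment_bound :: "real \<Rightarrow> real" where
  "gauss_moment_bound q = 1 + fact (2 * nat \<lceil>q\<rceil>) / (2 ^ nat \<lceil>q\<rceil> * fact (nat \<lceil>q\<rceil>))"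

lemma gauss_moment_bound_ge_one: "1 \<le> gauss_moment_bound q"
  unfolding gauss_moment_bound_def by simp

lemma sigma_q_powr_le:
  assumes q: "1 \<le> q" and \<sigma>: "\<sigma> > 0"
  shows "sigma_q q \<sigma> powr q \<le> gauss_moment_bound q * \<sigma> powr q"
proof -
  define n where "n = nat \<lceil>q\<rceil>"
  define g where "g x = \<sigma> powr q * normal_density 0 \<sigma> x
      + \<sigma> powr q / \<sigma> ^ (2 * n) * (normal_density 0 \<sigma> x * (x - 0) ^ (2 * n))" for x
  have integrable0: "integrable lborel (\<lambda>x. \<sigma> powr q * normal_density 0 \<sigma> x)"
    by (intro integrable_mult_right integrable_normal_density[OF \<sigma>])
  have integrable1: "integrable lborel
      (\<lambda>x. \<sigma> powr q / \<sigma> ^ (2 * n) * (normal_density 0 \<sigma> x * (x - 0) ^ (2 * n)))"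
    by (intro integrable_mult_right integrable_normal_moment[OF \<sigma>])
  have g: "integrable lborel g"
    unfolding g_def using integrable0 integrable1 by (rule Bochner_Integration.integrable_add)
  have "\<bar>x\<bar> powr q = \<sigma> powr q * \<bar>x / \<sigma>\<bar> powr q" for x
    using \<sigma> by (simp add: abs_divide powr_divide)
  also have "\<dots> x \<le> \<sigma> powr q * (1 + (x / \<sigma>) ^ (2 * n))" for x
    unfolding n_def using abs_powr_le_one_plus_power[OF q, of "x / \<sigma>"] by (intro mult_left_mono) auto
  also have "\<dots> x = \<sigma> powr q + \<sigma> powr q / \<sigma> ^ (2 * n) * x ^ (2 * n)" for x
    by (simp add: power_divide algebra_simps)
  finally have "\<bar>x\<bar> powr q * normal_density 0 \<sigma> x
      \<le> (\<sigma> powr q + \<sigma> powr q / \<sigma> ^ (2 * n) * x ^ (2 * n)) * normal_density 0 \<sigma> x" for x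
    by (intro mult_right_mono) auto
  then have pointwise: "\<bar>x\<bar> powr q * normal_density 0 \<sigma> x \<le> g x" for x
    by (simp add: g_def algebra_simps)
  then have "(\<integral>x. \<bar>x\<bar> powr q * normal_density 0 \<sigma> x \<partial>lborel) \<le> integral\<^sup>L lborel g"
    using order.trans[OF _ pointwise] by (intro integral_mono'[OF g]) auto
  also have "\<dots> = \<sigma> powr q + \<sigma> powr q / \<sigma> ^ (2 * n) * (fact (2 * n) / ((2 / \<sigma>\<^sup>2) ^ n * fact n))"
    unfolding g_def Bochner_Integration.integral_add[OF integrable0 integrable1]
    by (simp only: integral_mult_right_zero integral_normal_moment_even[OF \<sigma>]) (simp add: \<sigma>)
  also have "\<dots> = gauss_moment_bound q * \<sigma> powr q"
  proof -
    have "(2 / \<sigma>\<^sup>2) ^ n = 2 ^ n / \<sigma> ^ (2 * n)"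
      by (simp add: power_divide power_mult)
    then show ?thesis
      using \<sigma> by (simp add: gauss_moment_bound_def n_def field_simps)
  qed
  finally show ?thesis
    using q by (simp add: sigma_q_def powr_powr integral_nonneg_AE)
qed

lemma half_powr: "0 \<le> x \<Longrightarrow> (x / 2) powr q = x powr q / 2 powr (q::real)"
  by (simp add: powr_divide)

definition minimax_const :: "real \<Rightarrow> real" where
  "minimax_const q = std_normal_density 1 / (4 * 2 powr q * gauss_moment_bound q)"

lemma minimax_const_pos: "0 < minimax_const q"
  using std_normal_density_one_bounds(1) gauss_moment_bound_ge_one[of q]
  by (simp add: minimax_const_def)

lemma minimax_const_le: "minimax_const q \<le> std_normal_density 1 / (4 * 2 powr q)"
  using std_normal_density_one_bounds(1) gauss_moment_bound_ge_one[of q]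
  by (simp add: minimax_const_def divide_left_mono)

lemma sup_risk_ge_Phi_above_t_star:
  assumes q: "1 \<le> q" and est: "est \<in> estimators p" and \<sigma>: "\<sigma> > 0" and a: "a > 0"
    and s: "1 \<le> s" "s < p" and t: "t_star p s \<sigma> \<le> a"
  shows "ennreal (minimax_const q * Phi p s q \<sigma> a) \<le> (SUP \<beta>\<in>Omega p s a. risk p q \<sigma> est \<beta>)"
proof -
  let ?C = "minimax_const q"
  have "?C * (a powr q * psi p s a \<sigma>) \<le> std_normal_density 1 / (4 * 2 powr q) * (a powr q * psi p s a \<sigma>)"
    using minimax_const_le psi_nonneg by (intro mult_right_mono) auto
  also have "\<dots> \<le> (a / 2) powr q * psi p s a \<sigma> / 4"
    using a psi_nonneg[of p s a \<sigma>] std_normal_density_one_bounds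
    by (simp add: half_powr field_simps mult_left_le_one_le)
  finally have "ennreal (?C * (a powr q * psi p s a \<sigma>)) \<le> ennreal ((a / 2) powr q * psi p s a \<sigma> / 4)"
    by (rule ennreal_leI)
  also have "\<dots> \<le> (SUP \<beta>\<in>Omega p s a. risk p q \<sigma> est \<beta>)"
    using q by (intro sup_risk_ge_psi[OF est \<sigma> a s]) auto
  finally have signal: "ennreal (?C * (a powr q * psi p s a \<sigma>)) \<le> (SUP \<beta>\<in>Omega p s a. risk p q \<sigma> est \<beta>)" .
  have "?C * (sigma_q q \<sigma> powr q * real s) \<le> ?C * (gauss_moment_bound q * \<sigma> powr q * real s)"
    using sigma_q_powr_le[OF q \<sigma>] minimax_const_pos[of q] by (intro mult_left_mono mult_right_mono) auto
  also have "\<dots> \<le> real s * (\<sigma> / 2) powr q * (std_normal_density 1 / 2)"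
    using \<sigma> std_normal_density_one_bounds gauss_moment_bound_ge_one[of q]
    by (simp add: minimax_const_def half_powr field_simps)
  finally have "ennreal (?C * (sigma_q q \<sigma> powr q * real s))
      \<le> ennreal (real s * (\<sigma> / 2) powr q * (std_normal_density 1 / 2))"
    by (rule ennreal_leI)
  also have "\<dots> \<le> (SUP \<beta>\<in>Omega p s a. risk p q \<sigma> est \<beta>)"
    using s q by (intro sup_risk_ge_noise[OF est \<sigma> a]) auto
  finally have noise: "ennreal (?C * (sigma_q q \<sigma> powr q * real s)) \<le> (SUP \<beta>\<in>Omega p s a. risk p q \<sigma> est \<beta>)" .
  have "?C * Phi p s q \<sigma> a = max (?C * (a powr q * psi p s a \<sigma>)) (?C * (sigma_q q \<sigma> powr q * real s))"
    using t minimax_const_pos[of q] by (simp add: Phi_def max_mult_distrib_left)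
  then show ?thesis
    using signal noise by (simp add: max_def)
qed

lemma Omega_antimono: "a \<le> b \<Longrightarrow> Omega p s b \<subseteq> Omega p s a"
  by (auto simp: Omega_def)

lemma ln_sparsity_ratio_pos: "1 \<le> s \<Longrightarrow> 2 * real s < real p \<Longrightarrow> 0 < ln (real p / real s - 1)"
  by (simp add: field_simps)

text \<open>At \<open>a = t_star\<close> the threshold \<open>t_fun\<close> is \<open>a\<close> itself, so the second term of \<open>psi\<close> is
  \<open>s\<close> times the tail at zero.\<close>
lemma psi_t_star_ge:
  assumes \<sigma>: "\<sigma> > 0" and s: "1 \<le> s" "2 * real s < real p"
  shows "real s * std_normal_density 1 \<le> psi p s (t_star p s \<sigma>) \<sigma>"
proof -
  define L where "L = ln (real p / real s - 1)"
  have L: "L > 0" using ln_sparsity_ratio_pos[OF s] by (simp add: L_def)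
  have "\<sigma>\<^sup>2 * L / (\<sigma> * sqrt (2 * L)) = \<sigma> * sqrt (2 * L) / 2"
    using \<sigma> L by (simp add: field_simps power2_eq_square)
  then have "t_fun p s (t_star p s \<sigma>) \<sigma> = t_star p s \<sigma>"
    unfolding t_fun_def t_star_def L_def[symmetric] by linarith
  then have "psi p s (t_star p s \<sigma>) \<sigma> = real (p - s) * gauss_tail \<sigma> (t_star p s \<sigma>) + real s * gauss_tail \<sigma> 0"
    by (simp add: psi_def)
  moreover have "0 \<le> gauss_tail \<sigma> (t_star p s \<sigma>)"
    by (simp add: gauss_tail_def)
  ultimately show ?thesis
    using std_normal_density_one_le_gauss_tail_zero[OF \<sigma>] by (simp add: mult_left_mono add_increasing)
qed

lemma Phi_below_t_star:
  assumes \<sigma>: "\<sigma> > 0" and s: "1 \<le> s" "2 * real s < real p" and "a < t_star p s \<sigma>"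
  shows "Phi p s q \<sigma> a = real s * t_star p s \<sigma> powr q"
proof -
  have "0 \<le> ln (real p / real s - 1)" using ln_sparsity_ratio_pos[OF s] by simp
  then show ?thesis
    using assms \<sigma> by (simp add: Phi_def t_star_def powr_mult powr_half_sqrt[symmetric] powr_powr)
qed

lemma sup_risk_ge_Phi_below_t_star:
  assumes q: "1 \<le> q" and est: "est \<in> estimators p" and \<sigma>: "\<sigma> > 0"
    and s: "1 \<le> s" "2 * real s < real p" and t: "a < t_star p s \<sigma>"
  shows "ennreal (minimax_const q * Phi p s q \<sigma> a) \<le> (SUP \<beta>\<in>Omega p s a. risk p q \<sigma> est \<beta>)"
proof -
  let ?t = "t_star p s \<sigma>"
  have t_pos: "?t > 0"
    using \<sigma> ln_sparsity_ratio_pos[OF s] by (simp add: t_star_def)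
  have "minimax_const q * Phi p s q \<sigma> a \<le> std_normal_density 1 / (4 * 2 powr q) * (real s * ?t powr q)"
    unfolding Phi_below_t_star[OF \<sigma> s t] using minimax_const_le by (intro mult_right_mono) auto
  also have "\<dots> = real s * std_normal_density 1 * (?t powr q / (4 * 2 powr q))"
    by simp
  also have "\<dots> \<le> psi p s ?t \<sigma> * (?t powr q / (4 * 2 powr q))"
    by (intro mult_right_mono psi_t_star_ge[OF \<sigma> s]) auto
  also have "\<dots> = (?t / 2) powr q * psi p s ?t \<sigma> / 4"
    using t_pos by (simp add: half_powr mult_ac)
  finally have "ennreal (minimax_const q * Phi p s q \<sigma> a) \<le> ennreal ((?t / 2) powr q * psi p s ?t \<sigma> / 4)"
    by (rule ennreal_leI)
  also have "\<dots> \<le> (SUP \<beta>\<in>Omega p s ?t. risk p q \<sigma> est \<beta>)"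
    using s q by (intro sup_risk_ge_psi[OF est \<sigma> t_pos]) auto
  also have "\<dots> \<le> (SUP \<beta>\<in>Omega p s a. risk p q \<sigma> est \<beta>)"
    using Omega_antimono[of a ?t] t by (intro SUP_subset_mono) auto
  finally show ?thesis .
qed

theorem proposition5:
  fixes q :: real
  assumes "q \<ge> 1"
  shows "\<exists>C>0. \<forall>(p::nat) (s::nat) (a::real) (\<sigma>::real).
           a > 0 \<longrightarrow> \<sigma> > 0 \<longrightarrow> s \<ge> 1 \<longrightarrow> real s < real p / 2 \<longrightarrow>
           real s \<ge> 8 * q * ln (ln (real p)) \<longrightarrow>
           (INF est\<in>estimators p. SUP \<beta>\<in>Omega p s a. risk p q \<sigma> est \<beta>)
             \<ge> ennreal (C * Phi p s q \<sigma> a)"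
proof (intro exI[of _ "minimax_const q"] conjI allI impI minimax_const_pos INF_greatest)
  fix p s :: nat and a \<sigma> :: real and est
  assume "a > 0" "\<sigma> > 0" "s \<ge> 1" "real s < real p / 2" "est \<in> estimators p"
  then show "ennreal (minimax_const q * Phi p s q \<sigma> a) \<le> (SUP \<beta>\<in>Omega p s a. risk p q \<sigma> est \<beta>)"
    using assms sup_risk_ge_Phi_above_t_star sup_risk_ge_Phi_below_t_star
    by (cases "t_star p s \<sigma> \<le> a") (auto simp: not_le)
qed

end
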